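(* Let $\rho_1,\rho_2\in\mathbb{M}_2(\mathbb{C})$ be any two non-maximally mixed (NMM) thermal states. Then there exists $\Lambda\in SL(2,\mathbb{C})$ such that the action described below maps $\rho_1$ to $\rho_2$. Explicitly: writing $\rho_1=e^{-\beta H_1}/\mathrm{tr}(e^{-\beta H_1})$ and $\rho_2=e^{-\beta H_2}/\mathrm{tr}(e^{-\beta H_2})$ with a common $\beta>0$ and Hermitian $H_a$ having spectrum $\{0,\epsilon_a\}$, $\epsilon_a>0$, there is $\Lambda\in SL(2,\mathbb{C})$ with $$\rho_2=\frac{e^{-\beta(\Lambda H_1\Lambda^* )}}{\mathrm{tr}\big(e^{-\beta(\Lambda H_1\Lambda^* )}\big)}.$$
   Context: $\mathbb{M}_2(\mathbb{C})$ denotes the $2\times2$ complex matrices, $\Lambda^*$ the conjugate transpose, $\mathbb{1}_2$ the identity. A thermal state on $\mathbb{M}_2(\mathbb{C})$ is a density matrix of the Gibbs form $\rho=e^{-\beta H}/\mathrm{tr}(e^{-\beta H})$ with $\beta>0$ and $H$ Hermitian; it is non-maximally mixed (NMM) if $\rho\neq\frac12\mathbb{1}_2$. Every such $\rho$ can, for any prescribed $\beta>0$, be written in this form with a unique Hermitian $H$ whose spectrum is $\{0,\epsilon\}$ with $\epsilon>0$. The action of $\Lambda\in SL(2,\mathbb{C})$ on NMM thermal states is defined using this normalized $H$: $e^{-\beta H}/\mathrm{tr}(e^{-\beta H})\mapsto e^{-\beta(\Lambda H\Lambda^* )}/\mathrm{tr}(e^{-\beta(\Lambda H\Lambda^* )})$.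 *)

theory Defs
  imports "HOL-Analysis.Analysis"
begin

type_synonym cmat2 = "complex^2^2"

primrec mpow :: "cmat2 \<Rightarrow> nat \<Rightarrow> cmat2" where
  "mpow A 0 = mat 1"
| "mpow A (Suc n) = A ** mpow A n"

definition mexp :: "cmat2 \<Rightarrow> cmat2" where
  "mexp A = (\<chi> i j. \<Sum>n. (mpow A n $ i $ j) / of_nat (fact n))"

definition mtrace :: "cmat2 \<Rightarrow> complex" where
  "mtrace A = (\<Sum>i\<in>UNIV. A $ i $ i)"

definition adjoint_mat :: "cmat2 \<Rightarrow> cmat2" where
  "adjoint_mat A = (\<chi> i j. cnj (A $ j $ i))"

definition hermitian :: "cmat2 \<Rightarrow> bool" where
  "hermitian A \<longleftrightarrow> adjoint_mat A = A"

definition mspectrum :: "cmat2 \<Rightarrow> complex set" where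
  "mspectrum A = {c. \<exists>v. v \<noteq> 0 \<and> A *v v = c *s v}"

definition mscale :: "complex \<Rightarrow> cmat2 \<Rightarrow> cmat2" where
  "mscale c A = (\<chi> i j. c * A $ i $ j)"

definition gibbs :: "real \<Rightarrow> cmat2 \<Rightarrow> cmat2" where
  "gibbs \<beta> H = mscale (inverse (mtrace (mexp (mscale (- complex_of_real \<beta>) H))))
                       (mexp (mscale (- complex_of_real \<beta>) H))"

end

theory Submission
  imports Defs
begin

text \<open>A Hermitian \<open>H\<close> with spectrum \<open>{0, \<epsilon>}\<close>, \<open>\<epsilon> > 0\<close>, is positive semidefinite of rank one,
  i.e. \<open>H = w w\<^sup>*\<close> for a nonzero vector \<open>w\<close>. Congruence acts on such matrices by
  \<open>\<Lambda> (w w\<^sup>*) \<Lambda>\<^sup>* = (\<Lambda> w)(\<Lambda> w)\<^sup>*\<close>, and \<open>SL(2,\<complex>)\<close> acts transitively on nonzero vectors.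
  Hence some \<open>\<Lambda>\<close> already carries \<open>H\<^sub>1\<close> to \<open>H\<^sub>2\<close>, and a fortiori the Gibbs states agree.\<close>

definition outer :: "complex^2 \<Rightarrow> cmat2" where
  "outer w = (\<chi> i j. w $ i * cnj (w $ j))"

lemma congruence_outer: "L ** outer w ** adjoint_mat L = outer (L *v w)"
  by (simp add: vec_eq_iff forall_2 outer_def adjoint_mat_def matrix_matrix_mult_def
      matrix_vector_mult_def sum_2 distrib_left distrib_right mult_ac)

lemma hermitian_entry:
  assumes "hermitian H" shows "H $ i $ j = cnj (H $ j $ i)"
proof -
  have "adjoint_mat H $ i $ j = H $ i $ j" using assms by (simp add: hermitian_def)
  then show ?thesis by (simp add: adjoint_mat_def)
qed

lemma hermitian_diag_real:
  assumes "hermitian H" shows "H $ i $ i = complex_of_real (Re (H $ i $ i))"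
  using hermitian_entry[OF assms, of i i] by (simp add: complex_eq_iff)

lemma mspectrum_char_eq:
  assumes "c \<in> mspectrum H"
  shows "(H$1$1 - c) * (H$2$2 - c) = H$1$2 * H$2$1"
proof -
  obtain v where v: "v \<noteq> 0" "H *v v = c *s v" using assms by (auto simp: mspectrum_def)
  have row1: "(H$1$1 - c) * v$1 + H$1$2 * v$2 = 0"
    using arg_cong[OF v(2), of "\<lambda>x. x $ 1"]
    by (simp add: matrix_vector_mult_def sum_2 algebra_simps)
  have row2: "H$2$1 * v$1 + (H$2$2 - c) * v$2 = 0"
    using arg_cong[OF v(2), of "\<lambda>x. x $ 2"]
    by (simp add: matrix_vector_mult_def sum_2 algebra_simps)
  define D where "D = (H$1$1 - c) * (H$2$2 - c) - H$1$2 * H$2$1"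
  have "D * v$1 = (H$2$2 - c) * ((H$1$1 - c) * v$1 + H$1$2 * v$2) - H$1$2 * (H$2$1 * v$1 + (H$2$2 - c) * v$2)"
    "D * v$2 = (H$1$1 - c) * (H$2$1 * v$1 + (H$2$2 - c) * v$2) - H$2$1 * ((H$1$1 - c) * v$1 + H$1$2 * v$2)"
    by (simp_all add: D_def algebra_simps)
  then have "D * v$1 = 0" "D * v$2 = 0" using row1 row2 by simp_all
  moreover have "v$1 \<noteq> 0 \<or> v$2 \<noteq> 0" using v(1) by (auto simp: vec_eq_iff forall_2)
  ultimately show ?thesis by (auto simp: D_def)
qed

lemma positive_rank_one_eq_outer:
  fixes a d :: real
  assumes "H$1$1 = complex_of_real a" "H$2$2 = complex_of_real d" "H$2$1 = cnj (H$1$2)"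
    and "a * d = (cmod (H$1$2))^2" "a \<ge> 0" "a + d > 0"
  shows "\<exists>w. w \<noteq> 0 \<and> H = outer w"
proof -
  define b where "b = H$1$2"
  have bb: "b * cnj b = complex_of_real ((cmod b)^2)"
    using complex_norm_square[of b] by simp
  show ?thesis
  proof (cases "a = 0")
    case True
    then have "b = 0" "d > 0" using assms(4,6) by (simp_all add: b_def)
    define w :: "complex^2" where "w = (\<chi> i. if i = 1 then 0 else complex_of_real (sqrt d))"
    have "w \<noteq> 0" using \<open>d > 0\<close> by (auto simp: w_def vec_eq_iff forall_2)
    moreover have "H = outer w"
      using assms(1-3) True \<open>b = 0\<close> \<open>d > 0\<close>
      by (simp add: outer_def w_def vec_eq_iff forall_2 b_def flip: of_real_mult)
    ultimately show ?thesis by blast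
  next
    case False
    then have "a > 0" using assms(5) by simp
    define s where "s = complex_of_real (sqrt a)"
    have s: "s \<noteq> 0" "cnj s = s" "s * s = complex_of_real a"
      using \<open>a > 0\<close> by (simp_all add: s_def flip: of_real_mult)
    define w :: "complex^2" where "w = (\<chi> i. if i = 1 then s else cnj b / s)"
    have "cnj b / s * cnj (cnj b / s) = complex_of_real ((cmod b)^2 / a)"
      using bb s by (simp add: field_simps)
    also have "(cmod b)^2 / a = d" using assms(4) \<open>a > 0\<close> by (simp add: b_def field_simps)
    finally have "cnj b / s * cnj (cnj b / s) = complex_of_real d" .
    then have "H = outer w"
      using assms(1-3) s by (simp add: outer_def w_def vec_eq_iff forall_2 b_def mult.commute)
    moreover have "w \<noteq> 0" using s by (auto simp: w_def vec_eq_iff)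
    ultimately show ?thesis by blast
  qed
qed

lemma hermitian_spectrum_zero_pos_eq_outer:
  fixes \<epsilon> :: real
  assumes "hermitian H" "mspectrum H = {0, complex_of_real \<epsilon>}" "\<epsilon> > 0"
  shows "\<exists>w. w \<noteq> 0 \<and> H = outer w"
proof -
  define a where "a = Re (H$1$1)"
  define d where "d = Re (H$2$2)"
  have ha: "H$1$1 = complex_of_real a" and hd: "H$2$2 = complex_of_real d"
    unfolding a_def d_def by (fact hermitian_diag_real[OF assms(1)])+
  have hc: "H$2$1 = cnj (H$1$2)" by (rule hermitian_entry[OF assms(1)])
  have off: "H$1$2 * H$2$1 = complex_of_real ((cmod (H$1$2))^2)"
    using complex_norm_square[of "H$1$2"] hc by simp
  have "complex_of_real (a * d) = complex_of_real ((cmod (H$1$2))^2)"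
    using mspectrum_char_eq[of 0 H] assms(2) ha hd off by simp
  then have det0: "a * d = (cmod (H$1$2))^2" by (simp only: of_real_eq_iff)
  have "complex_of_real ((a - \<epsilon>) * (d - \<epsilon>)) = complex_of_real ((cmod (H$1$2))^2)"
    using mspectrum_char_eq[of "complex_of_real \<epsilon>" H] assms(2) ha hd off by simp
  then have "(a - \<epsilon>) * (d - \<epsilon>) = (cmod (H$1$2))^2" by (simp only: of_real_eq_iff)
  with det0 have "\<epsilon> * \<epsilon> = \<epsilon> * (a + d)" by (simp add: algebra_simps)
  with assms(3) have trace: "a + d = \<epsilon>" by simp
  have "a \<ge> 0"
  proof (rule ccontr)
    assume "\<not> a \<ge> 0"
    with trace assms(3) have "a * d < 0" by (simp add: mult_neg_pos)
    with det0 show False by simp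
  qed
  with ha hd hc det0 trace assms(3) show ?thesis
    by (intro positive_rank_one_eq_outer) auto
qed

lemma SL2_maps_nonzero_to_axis:
  fixes w :: "'a::field^2"
  assumes "w \<noteq> 0"
  shows "\<exists>N. det N = 1 \<and> N *v w = axis 1 1"
proof (cases "w$1 = 0")
  case True
  then have "w$2 \<noteq> 0" using assms by (auto simp: vec_eq_iff forall_2)
  define N :: "'a^2^2" where "N = (\<chi> i j. if i = 1 then (if j = 1 then 0 else 1 / w$2)
                                             else (if j = 1 then - w$2 else 0))"
  have "det N = 1" "N *v w = axis 1 1" using \<open>w$2 \<noteq> 0\<close> True
    by (simp_all add: det_2 N_def axis_def vec_eq_iff forall_2 matrix_vector_mult_def sum_2)
  then show ?thesis by blast
next
  case False
  define N :: "'a^2^2" where "N = (\<chi> i j. if i = 1 then (if j = 1 then 1 / w$1 else 0)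
                                             else (if j = 1 then - w$2 else w$1))"
  have "det N = 1" "N *v w = axis 1 1" using False
    by (simp_all add: det_2 N_def axis_def vec_eq_iff forall_2 matrix_vector_mult_def sum_2
        algebra_simps)
  then show ?thesis by blast
qed

lemma SL2_transitive_on_nonzero:
  fixes w1 w2 :: "'a::field^2"
  assumes "w1 \<noteq> 0" "w2 \<noteq> 0"
  shows "\<exists>L. det L = 1 \<and> L *v w1 = w2"
proof -
  obtain N1 where N1: "det N1 = 1" "N1 *v w1 = axis 1 1"
    using SL2_maps_nonzero_to_axis[OF assms(1)] by blast
  obtain N2 where N2: "det N2 = 1" "N2 *v w2 = axis 1 1"
    using SL2_maps_nonzero_to_axis[OF assms(2)] by blast
  obtain B where B: "B ** N2 = mat 1"
    using N2(1) invertible_det_nz invertible_left_inverse by (metis one_neq_zero)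
  have "det B = 1" using arg_cong[OF B, of det] N2(1) by (simp add: det_mul)
  moreover have "(B ** N1) *v w1 = w2"
    using N1(2) N2(2) B by (metis matrix_vector_mul_assoc matrix_vector_mul_lid)
  ultimately show ?thesis using N1(1) by (metis det_mul mult_1)
qed

theorem proposition2:
  fixes \<beta> \<epsilon>1 \<epsilon>2 :: real and H1 H2 :: cmat2
  assumes "\<beta> > 0"
    and "hermitian H1" and "mspectrum H1 = {0, complex_of_real \<epsilon>1}" and "\<epsilon>1 > 0"
    and "hermitian H2" and "mspectrum H2 = {0, complex_of_real \<epsilon>2}" and "\<epsilon>2 > 0"
  shows "\<exists>\<Lambda> :: cmat2. det \<Lambda> = 1 \<and>
           gibbs \<beta> H2 = gibbs \<beta> (\<Lambda> ** H1 ** adjoint_mat \<Lambda>)"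
proof -
  obtain w1 where w1: "w1 \<noteq> 0" "H1 = outer w1"
    using hermitian_spectrum_zero_pos_eq_outer assms(2-4) by blast
  obtain w2 where w2: "w2 \<noteq> 0" "H2 = outer w2"
    using hermitian_spectrum_zero_pos_eq_outer assms(5-7) by blast
  obtain \<Lambda> where \<Lambda>: "det \<Lambda> = 1" "\<Lambda> *v w1 = w2"
    using SL2_transitive_on_nonzero[OF w1(1) w2(1)] by blast
  have "\<Lambda> ** H1 ** adjoint_mat \<Lambda> = H2"
    using w1(2) w2(2) \<Lambda>(2) congruence_outer by simp
  then show ?thesis using \<Lambda>(1) by metis
qed

end
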